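(* The feasible SINR region of a multicast system is log-convex: the set $\log(\Upsilon)=\{(\log\mu_1,\dots,\log\mu_N):\boldsymbol\mu\in\Upsilon,\ \boldsymbol\mu>\mathbf 0\}$ is a convex subset of $\mathbb R^N$.
   Context: Multicast system: $N$ transmitters $T_1,\dots,T_N$; transmitter $T_i$ has $K_i\geq1$ receivers $R_i^{k}$, $k\in\mathcal K_i=\{1,\dots,K_i\}$. Channel gains $g_{r_i^{k},t_j}\geq 0$ (from $T_j$ to $R_i^k$) with $g_{r_i^{k},t_i}>0$, such that for every choice $k_i\in\mathcal K_i$ ($i=1,\dots,N$) the $N\times N$ matrix with $(i,j)$ entry $g_{r_i^{k_i},t_j}/g_{r_i^{k_i},t_i}$ for $j\neq i$ and $0$ on the diagonal is irreducible; noise variance $\sigma^2>0$. For $\mathbf p\geq\mathbf 0$: $\gamma_i^{k}(\mathbf p)=\frac{g_{r_i^{k},t_i}p_i}{\sum_{j\neq i}g_{r_i^{k},t_j}p_j+\sigma^2}$, $\gamma_i(\mathbf p)=\min_{k\in\mathcal K_i}\gamma_i^k(\mathbf p)$, $\Gamma(\mathbf p)=(\gamma_1(\mathbf p),\dots,\gamma_N(\mathbf p))$. The feasible SINR region is $\Upsilon=\{\Gamma(\mathbf p):\mathbf p\in\mathbb R^N,\mathbf p\geq\mathbf 0\}$. *)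

theory Defs
  imports "HOL-Analysis.Analysis"
begin

text \<open>Transmitters are indexed by a finite type 'n (so N = CARD('n)).
  Transmitter i has receivers k in {1..K i}. Channel gain g i k j is the gain
  from transmitter T_j to receiver R_i^k.\<close>

definition irreducible_mat :: "('n \<Rightarrow> 'n \<Rightarrow> real) \<Rightarrow> bool" where
  "irreducible_mat M \<longleftrightarrow>
     (\<forall>i j. i \<noteq> j \<longrightarrow> (i, j) \<in> {(a, b). M a b > 0}\<^sup>+)"

definition sinr_rx :: "('n \<Rightarrow> nat \<Rightarrow> 'n \<Rightarrow> real) \<Rightarrow> real \<Rightarrow> real^'n \<Rightarrow> 'n \<Rightarrow> nat \<Rightarrow> real" where
  "sinr_rx g sigma2 p i k =
     g i k i * p$i / ((\<Sum>j\<in>UNIV - {i}. g i k j * p$j) + sigma2)"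

definition sinr :: "('n \<Rightarrow> nat \<Rightarrow> 'n \<Rightarrow> real) \<Rightarrow> ('n \<Rightarrow> nat) \<Rightarrow> real \<Rightarrow> real^'n \<Rightarrow> 'n \<Rightarrow> real" where
  "sinr g K sigma2 p i = Min ((\<lambda>k. sinr_rx g sigma2 p i k) ` {1..K i})"

definition Gamma :: "('n \<Rightarrow> nat \<Rightarrow> 'n \<Rightarrow> real) \<Rightarrow> ('n \<Rightarrow> nat) \<Rightarrow> real \<Rightarrow> real^'n \<Rightarrow> real^'n" where
  "Gamma g K sigma2 p = (\<chi> i. sinr g K sigma2 p i)"

definition feasible_sinr_region :: "('n \<Rightarrow> nat \<Rightarrow> 'n \<Rightarrow> real) \<Rightarrow> ('n \<Rightarrow> nat) \<Rightarrow> real \<Rightarrow> (real^'n) set" where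
  "feasible_sinr_region g K sigma2 = {Gamma g K sigma2 p | p. \<forall>i. p$i \<ge> 0}"

definition log_set :: "(real^'n) set \<Rightarrow> (real^'n) set" where
  "log_set U = {(\<chi> i. ln (mu$i)) | mu. mu \<in> U \<and> (\<forall>i. mu$i > 0)}"

end

theory Submission imports Defs begin

text \<open>With the interference function I_i(p) = max_k (sum_{j /= i} g_ikj p_j + sigma^2) / g_iki
  the SINR is gamma_i(p) = p_i / I_i(p). Each I_i is monotone, continuous and, by Hoelder's
  inequality, log-convex in log p: I(p^u p'^v) <= I(p)^u I(p')^v. If mu = Gamma(p) and
  mu' = Gamma(p') are positive, then p = mu I(p) and p' = mu' I(p'), so q = p^u p'^v satisfies
  c I(q) <= q for c = mu^u mu'^v. Iterating the monotone map x |-> c I(x) from q gives a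
  decreasing sequence whose limit x solves x = c I(x), i.e. Gamma(x) = c; hence
  u log mu + v log mu' = log c lies in log Upsilon.\<close>

lemma powr_mult_le_scaled_convex_comb:
  fixes x y A B u v :: real
  assumes "x > 0" "y > 0" "A > 0" "B > 0" "u \<ge> 0" "v \<ge> 0" "u + v = 1"
  shows "x powr u * y powr v \<le> (A powr u * B powr v) * (u * x / A + v * y / B)"
proof -
  have "(x/A) powr u * (y/B) powr v \<le> u * (x/A) + v * (y/B)"
    using Youngs_inequality_0[of u v "x/A" "y/B"] assms by simp
  moreover have "(x/A) powr u * (y/B) powr v = (x powr u * y powr v) / (A powr u * B powr v)"
    by (simp add: powr_divide)
  moreover have "A powr u * B powr v > 0" using assms by simp
  ultimately show ?thesis by (simp add: divide_le_eq mult.commute)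
qed

lemma holder_affine_sum:
  fixes a x y :: "'a \<Rightarrow> real" and s u v :: real
  assumes "finite S" "\<forall>j\<in>S. a j \<ge> 0 \<and> x j > 0 \<and> y j > 0" "s > 0" "u \<ge> 0" "v \<ge> 0" "u + v = 1"
  shows "(\<Sum>j\<in>S. a j * (x j powr u * y j powr v)) + s
     \<le> ((\<Sum>j\<in>S. a j * x j) + s) powr u * ((\<Sum>j\<in>S. a j * y j) + s) powr v"
proof -
  define A where "A = (\<Sum>j\<in>S. a j * x j) + s"
  define B where "B = (\<Sum>j\<in>S. a j * y j) + s"
  define C where "C = A powr u * B powr v"
  have A_pos: "A > 0" unfolding A_def using assms
    by (smt (verit) mult_nonneg_nonneg sum_nonneg)
  have B_pos: "B > 0" unfolding B_def using assms
    by (smt (verit) mult_nonneg_nonneg sum_nonneg)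
  have term_le: "a j * (x j powr u * y j powr v) \<le> C * (u * (a j * x j) / A + v * (a j * y j) / B)"
    if "j \<in> S" for j
  proof -
    have "x j powr u * y j powr v \<le> C * (u * x j / A + v * y j / B)"
      unfolding C_def using powr_mult_le_scaled_convex_comb[of "x j" "y j" A B u v] assms that A_pos B_pos
      by auto
    then have "a j * (x j powr u * y j powr v) \<le> a j * (C * (u * x j / A + v * y j / B))"
      using assms that by (simp add: mult_left_mono)
    then show ?thesis by (simp add: algebra_simps)
  qed
  have "s = s powr u * s powr v" using assms by (simp flip: powr_add)
  also have "\<dots> \<le> C * (u * s / A + v * s / B)"
    unfolding C_def using powr_mult_le_scaled_convex_comb[of s s A B u v] assms A_pos B_pos by auto
  finally have const_le: "s \<le> C * (u * s / A + v * s / B)" .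
  have "(\<Sum>j\<in>S. a j * (x j powr u * y j powr v)) + s
      \<le> (\<Sum>j\<in>S. C * (u * (a j * x j) / A + v * (a j * y j) / B)) + C * (u * s / A + v * s / B)"
    using sum_mono[of S "\<lambda>j. a j * (x j powr u * y j powr v)", OF term_le] const_le by linarith
  also have "\<dots> = C * (u * A / A + v * B / B)"
    unfolding A_def B_def
    by (simp add: sum.distrib sum_distrib_left sum_divide_distrib[symmetric] algebra_simps
        add_divide_distrib flip: sum_distrib_left)
  also have "\<dots> = C" using A_pos B_pos assms by simp
  finally show ?thesis unfolding C_def A_def B_def .
qed

lemma continuous_on_Max_image:
  fixes f :: "'a::topological_space \<Rightarrow> 'b \<Rightarrow> real"
  assumes "finite K" "K \<noteq> {}" "\<And>k. k \<in> K \<Longrightarrow> continuous_on S (\<lambda>x. f x k)"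
  shows "continuous_on S (\<lambda>x. Max (f x ` K))"
  using assms
proof (induction K rule: finite_ne_induct)
  case (insert k K)
  then show ?case by (simp add: continuous_on_max)
qed simp

lemma monotone_iteration_fixed_point:
  fixes T :: "real^'n \<Rightarrow> real^'n"
  assumes mono: "\<And>x y. 0 \<le> x \<Longrightarrow> x \<le> y \<Longrightarrow> T x \<le> T y"
    and nonneg: "\<And>x. 0 \<le> x \<Longrightarrow> 0 \<le> T x"
    and cont: "continuous_on {x. 0 \<le> x} T"
    and q: "0 \<le> q" "T q \<le> q"
  shows "\<exists>p. 0 \<le> p \<and> T p = p"
proof -
  define x where "x n = (T ^^ n) q" for n
  have x_Suc: "x (Suc n) = T (x n)" for n by (simp add: x_def)
  have x_nonneg: "0 \<le> x n" for n
    by (induction n) (simp_all add: x_def q nonneg)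
  have x_dec: "x (Suc n) \<le> x n" for n
  proof (induction n)
    case 0
    then show ?case using q by (simp add: x_def)
  next
    case (Suc n)
    then show ?case using mono[OF x_nonneg Suc] by (simp only: x_Suc)
  qed
  have "\<exists>l. (\<lambda>n. x n $ j) \<longlonglongrightarrow> l" for j
  proof -
    have "decseq (\<lambda>n. x n $ j)" using x_dec by (intro decseq_SucI) (simp add: less_eq_vec_def)
    moreover have "\<forall>n. 0 \<le> x n $ j" using x_nonneg by (simp add: less_eq_vec_def)
    ultimately show ?thesis by (metis decseq_convergent)
  qed
  then obtain l where l: "\<And>j. (\<lambda>n. x n $ j) \<longlonglongrightarrow> l j" by metis
  define L where "L = (\<chi> j. l j)"
  have x_lim: "x \<longlonglongrightarrow> L"
    by (rule vec_tendstoI) (simp add: L_def l)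
  have L_nonneg: "0 \<le> L"
    using x_nonneg by (auto intro!: LIMSEQ_le_const[OF l] simp: L_def less_eq_vec_def)
  have "(\<lambda>n. T (x n)) \<longlonglongrightarrow> T L"
    using continuous_on_tendsto_compose[OF cont x_lim] L_nonneg x_nonneg by (simp add: o_def)
  moreover have "(\<lambda>n. T (x n)) \<longlonglongrightarrow> L"
    using LIMSEQ_Suc[OF x_lim] by (simp add: x_Suc)
  ultimately have "T L = L" by (rule LIMSEQ_unique)
  with L_nonneg show ?thesis by blast
qed

locale multicast_system =
  fixes g :: "'n::finite \<Rightarrow> nat \<Rightarrow> 'n \<Rightarrow> real" and K :: "'n \<Rightarrow> nat" and sigma2 :: real
  assumes K_pos: "\<forall>i. K i \<ge> 1"
    and g_nonneg: "\<forall>i k j. k \<in> {1..K i} \<longrightarrow> g i k j \<ge> 0"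
    and g_direct_pos: "\<forall>i k. k \<in> {1..K i} \<longrightarrow> g i k i > 0"
    and noise: "sigma2 > 0"
begin

definition rx_interference :: "real^'n \<Rightarrow> 'n \<Rightarrow> nat \<Rightarrow> real" where
  "rx_interference p i k = ((\<Sum>j\<in>UNIV - {i}. g i k j * p$j) + sigma2) / g i k i"

definition interference :: "real^'n \<Rightarrow> 'n \<Rightarrow> real" where
  "interference p i = Max ((\<lambda>k. rx_interference p i k) ` {1..K i})"

lemma direct_gain_pos: "k \<in> {1..K i} \<Longrightarrow> g i k i > 0"
  using g_direct_pos by blast

lemma receivers_nonempty: "{1..K i} \<noteq> {}"
  using K_pos by auto

lemma rx_interference_pos:
  assumes "0 \<le> p" "k \<in> {1..K i}"
  shows "rx_interference p i k > 0"
proof -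
  have "(\<Sum>j\<in>UNIV - {i}. g i k j * p$j) \<ge> 0"
    using assms g_nonneg by (intro sum_nonneg) (auto simp: less_eq_vec_def)
  then show ?thesis unfolding rx_interference_def using noise g_direct_pos assms by auto
qed

lemma rx_interference_le_interference: "k \<in> {1..K i} \<Longrightarrow> rx_interference p i k \<le> interference p i"
  unfolding interference_def by (rule Max_ge) auto

lemma interference_attained:
  obtains k where "k \<in> {1..K i}" "interference p i = rx_interference p i k"
proof -
  have "interference p i \<in> (\<lambda>k. rx_interference p i k) ` {1..K i}"
    unfolding interference_def using receivers_nonempty by (intro Max_in) auto
  then show ?thesis using that by auto
qed

lemma interference_pos: "0 \<le> p \<Longrightarrow> interference p i > 0"
  by (metis interference_attained rx_interference_pos)

lemma sinr_rx_eq: "k \<in> {1..K i} \<Longrightarrow> sinr_rx g sigma2 p i k = p$i / rx_interference p i k"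
  unfolding sinr_rx_def rx_interference_def using g_direct_pos by (auto simp: field_simps)

lemma sinr_eq_div_interference:
  assumes "0 \<le> p"
  shows "sinr g K sigma2 p i = p$i / interference p i"
  unfolding sinr_def
proof (rule Min_eqI)
  show "finite ((\<lambda>k. sinr_rx g sigma2 p i k) ` {1..K i})" by auto
  obtain k0 where "k0 \<in> {1..K i}" "interference p i = rx_interference p i k0"
    using interference_attained .
  then show "p$i / interference p i \<in> (\<lambda>k. sinr_rx g sigma2 p i k) ` {1..K i}"
    using sinr_rx_eq by force
  fix y assume "y \<in> (\<lambda>k. sinr_rx g sigma2 p i k) ` {1..K i}"
  then obtain k where k: "k \<in> {1..K i}" "y = p$i / rx_interference p i k"
    using sinr_rx_eq by auto
  show "p$i / interference p i \<le> y" unfolding k(2)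
  proof (rule divide_left_mono)
    show "rx_interference p i k \<le> interference p i" using rx_interference_le_interference[OF k(1)] .
    show "0 \<le> p$i" using assms by (simp add: less_eq_vec_def)
    show "0 < interference p i * rx_interference p i k"
      using rx_interference_pos[OF assms k(1)] interference_pos[OF assms] by simp
  qed
qed

lemma interference_mono:
  assumes "0 \<le> p" "p \<le> q"
  shows "interference p i \<le> interference q i"
proof -
  obtain k where k: "k \<in> {1..K i}" "interference p i = rx_interference p i k"
    using interference_attained .
  have "(\<Sum>j\<in>UNIV - {i}. g i k j * p$j) \<le> (\<Sum>j\<in>UNIV - {i}. g i k j * q$j)"
    using assms g_nonneg k(1) by (intro sum_mono mult_left_mono) (auto simp: less_eq_vec_def)
  then have "rx_interference p i k \<le> rx_interference q i k"
    unfolding rx_interference_def using direct_gain_pos[OF k(1)] by (intro divide_right_mono) auto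
  then show ?thesis using rx_interference_le_interference[OF k(1), of q] k(2) by linarith
qed

lemma continuous_on_interference: "continuous_on S (\<lambda>p. interference p i)"
  unfolding interference_def
proof (rule continuous_on_Max_image[OF _ receivers_nonempty])
  show "continuous_on S (\<lambda>p. rx_interference p i k)" if "k \<in> {1..K i}" for k
    unfolding rx_interference_def using direct_gain_pos[OF that]
    by (intro continuous_intros) auto
qed simp

lemma rx_interference_log_convex:
  assumes p: "\<forall>j. p$j > 0" and p': "\<forall>j. p'$j > 0" and k: "k \<in> {1..K i}"
    and uv: "u \<ge> 0" "v \<ge> 0" "u + v = 1"
  shows "rx_interference (\<chi> j. p$j powr u * p'$j powr v) i k
           \<le> rx_interference p i k powr u * rx_interference p' i k powr v"
proof -
  define A where "A = (\<Sum>j\<in>UNIV - {i}. g i k j * p$j) + sigma2"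
  define B where "B = (\<Sum>j\<in>UNIV - {i}. g i k j * p'$j) + sigma2"
  have G: "g i k i > 0" using direct_gain_pos[OF k] .
  have "rx_interference (\<chi> j. p$j powr u * p'$j powr v) i k
      = ((\<Sum>j\<in>UNIV - {i}. g i k j * (p$j powr u * p'$j powr v)) + sigma2) / g i k i"
    unfolding rx_interference_def by simp
  also have "\<dots> \<le> A powr u * B powr v / g i k i"
    unfolding A_def B_def using G p p' g_nonneg k noise uv
    by (intro divide_right_mono holder_affine_sum) auto
  also have "\<dots> = A powr u * B powr v / (g i k i powr u * g i k i powr v)"
    using G uv by (simp flip: powr_add)
  also have "\<dots> = rx_interference p i k powr u * rx_interference p' i k powr v"
    unfolding rx_interference_def A_def B_def powr_divide by simp
  finally show ?thesis .
qed

lemma interference_log_convex: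
  assumes p: "\<forall>j. p$j > 0" and p': "\<forall>j. p'$j > 0" and uv: "u \<ge> 0" "v \<ge> 0" "u + v = 1"
  shows "interference (\<chi> j. p$j powr u * p'$j powr v) i \<le> interference p i powr u * interference p' i powr v"
proof -
  obtain k where k: "k \<in> {1..K i}"
    "interference (\<chi> j. p$j powr u * p'$j powr v) i = rx_interference (\<chi> j. p$j powr u * p'$j powr v) i k"
    using interference_attained .
  have nonneg: "0 \<le> p" "0 \<le> p'" using p p' by (auto simp: less_eq_vec_def less_imp_le)
  have "rx_interference p i k powr u \<le> interference p i powr u"
    using rx_interference_le_interference[OF k(1)] rx_interference_pos[OF nonneg(1) k(1)] uv
    by (intro powr_mono2) auto
  moreover have "rx_interference p' i k powr v \<le> interference p' i powr v"
    using rx_interference_le_interference[OF k(1)] rx_interference_pos[OF nonneg(2) k(1)] uv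
    by (intro powr_mono2) auto
  ultimately have "rx_interference p i k powr u * rx_interference p' i k powr v
      \<le> interference p i powr u * interference p' i powr v"
    by (intro mult_mono) auto
  then show ?thesis using k(2) rx_interference_log_convex[OF p p' k(1) uv] by linarith
qed

lemma power_of_positive_sinr:
  assumes "0 \<le> p" "Gamma g K sigma2 p $ i > 0"
  shows "p$i > 0" "p$i = Gamma g K sigma2 p $ i * interference p i"
proof -
  have sinr: "Gamma g K sigma2 p $ i = p$i / interference p i"
    using sinr_eq_div_interference[OF assms(1)] by (simp add: Gamma_def)
  show "p$i > 0" using assms(2) interference_pos[OF assms(1), of i] by (simp add: sinr zero_less_divide_iff)
  show "p$i = Gamma g K sigma2 p $ i * interference p i"
    using interference_pos[OF assms(1), of i] by (simp add: sinr)
qed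

lemma feasible_if_supersolution:
  assumes c: "\<forall>i. c$i > 0" and q: "0 \<le> q" "\<forall>i. c$i * interference q i \<le> q$i"
  shows "c \<in> feasible_sinr_region g K sigma2"
proof -
  define T where "T x = (\<chi> i. c$i * interference x i)" for x
  obtain p where p: "0 \<le> p" "T p = p"
  proof (rule exE[OF monotone_iteration_fixed_point])
    show "T x \<le> T y" if "0 \<le> x" "x \<le> y" for x y
      using interference_mono[OF that] c by (auto simp: T_def less_eq_vec_def intro: mult_left_mono less_imp_le)
    show "0 \<le> T x" if "0 \<le> x" for x
      using interference_pos[OF that] c by (auto simp: T_def less_eq_vec_def less_imp_le)
    show "continuous_on {x. 0 \<le> x} T"
      unfolding T_def by (intro continuous_intros continuous_on_interference)
    show "T q \<le> q" using q by (simp add: T_def less_eq_vec_def)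
  qed (use q in auto)
  have "sinr g K sigma2 p i = c$i" for i
  proof -
    have "p$i = c$i * interference p i" using p(2) by (simp add: T_def vec_eq_iff)
    then show ?thesis
      using sinr_eq_div_interference[OF p(1)] interference_pos[OF p(1), of i] by simp
  qed
  then have "Gamma g K sigma2 p = c" by (simp add: Gamma_def vec_eq_iff)
  then show ?thesis using p(1) by (auto simp: feasible_sinr_region_def less_eq_vec_def)
qed

lemma convex_log_feasible_sinr_region: "convex (log_set (feasible_sinr_region g K sigma2))"
  unfolding convex_def
proof (intro ballI allI impI)
  fix a b :: "real^'n" and u v :: real
  assume "a \<in> log_set (feasible_sinr_region g K sigma2)" "b \<in> log_set (feasible_sinr_region g K sigma2)"
    and uv: "0 \<le> u" "0 \<le> v" "u + v = 1"
  then obtain p p' where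
      a: "a = (\<chi> i. ln (Gamma g K sigma2 p $ i))" "\<forall>i. Gamma g K sigma2 p $ i > 0" "0 \<le> p" and
      b: "b = (\<chi> i. ln (Gamma g K sigma2 p' $ i))" "\<forall>i. Gamma g K sigma2 p' $ i > 0" "0 \<le> p'"
    unfolding log_set_def feasible_sinr_region_def by (auto simp: less_eq_vec_def)
  define m where "m = Gamma g K sigma2 p"
  define m' where "m' = Gamma g K sigma2 p'"
  define q where "q = (\<chi> j. p$j powr u * p'$j powr v)"
  define c where "c = (\<chi> i. m$i powr u * m'$i powr v)"
  have m_pos: "\<forall>i. m$i > 0" "\<forall>i. m'$i > 0" using a b by (simp_all add: m_def m'_def)
  have p_pos: "\<forall>j. p$j > 0" "\<forall>j. p'$j > 0"
    using power_of_positive_sinr(1) a(2,3) b(2,3) by blast+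
  have c_pos: "\<forall>i. c$i > 0" using m_pos by (simp add: c_def less_imp_neq[symmetric])
  have "c$i * interference q i \<le> q$i" for i
  proof -
    have "c$i * interference q i \<le> c$i * (interference p i powr u * interference p' i powr v)"
      unfolding q_def using interference_log_convex[OF p_pos uv] c_pos by (simp add: mult_left_mono less_imp_le)
    also have "\<dots> = (m$i * interference p i) powr u * (m'$i * interference p' i) powr v"
      by (simp add: c_def powr_mult)
    also have "\<dots> = q$i"
      using power_of_positive_sinr(2) a(2,3) b(2,3) by (simp add: q_def m_def m'_def)
    finally show ?thesis .
  qed
  moreover have "0 \<le> q" by (simp add: q_def less_eq_vec_def)
  ultimately have "c \<in> feasible_sinr_region g K sigma2"
    using feasible_if_supersolution c_pos by blast
  moreover have "u *\<^sub>R a + v *\<^sub>R b = (\<chi> i. ln (c$i))"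
    using m_pos by (simp add: a(1) b(1) m_def m'_def c_def vec_eq_iff ln_mult ln_powr less_imp_neq[symmetric])
  ultimately show "u *\<^sub>R a + v *\<^sub>R b \<in> log_set (feasible_sinr_region g K sigma2)"
    unfolding log_set_def using c_pos by blast
qed

end

theorem theorem5:
  fixes g :: "'n::finite \<Rightarrow> nat \<Rightarrow> 'n \<Rightarrow> real"
    and K :: "'n \<Rightarrow> nat"
    and sigma2 :: real
  assumes K_pos: "\<forall>i. K i \<ge> 1"
    and g_nonneg: "\<forall>i k j. k \<in> {1..K i} \<longrightarrow> g i k j \<ge> 0"
    and g_direct_pos: "\<forall>i k. k \<in> {1..K i} \<longrightarrow> g i k i > 0"
    and irred: "\<forall>kk :: 'n \<Rightarrow> nat. (\<forall>i. kk i \<in> {1..K i}) \<longrightarrow>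
                  irreducible_mat (\<lambda>i j. if j = i then 0 else g i (kk i) j / g i (kk i) i)"
    and noise: "sigma2 > 0"
  shows "convex (log_set (feasible_sinr_region g K sigma2))"
proof -
  interpret multicast_system g K sigma2
    using K_pos g_nonneg g_direct_pos noise by unfold_locales
  show ?thesis by (rule convex_log_feasible_sinr_region)
qed

end
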